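(* Let $\mathcal{M}(Y,r)$ be a matroid of rank $k$ on ground set $Y=\{y_1,\dots,y_m\}$, and let $\mathcal{I}_{\mathcal{M}}(Z,\mathcal{R})$ be the corresponding generalized index coding problem (defined in the context). Then $\mathcal{M}$ has a linear representation over $\mathbb{F}_2$ if and only if there exists a perfect scalar linear index code for $\mathcal{I}_{\mathcal{M}}(Z,\mathcal{R})$ over $\mathbb{F}_2$.
   Context: For a matroid $\mathcal{M}$, $\mathcal{B}(\mathcal{M})$ denotes its set of bases and $\mathfrak{C}(\mathcal{M})$ its set of circuits. $\mathcal{M}$ has a linear representation over $\mathbb{F}_2$ if there is a matrix over $\mathbb{F}_2$ with columns indexed by $Y$ such that for every $S\subseteq Y$ the rank of the submatrix of columns indexed by $S$ equals $r(S)$. The problem $\mathcal{I}_{\mathcal{M}}(Z,\mathcal{R})$: messages $Z=Y\cup X$ with $X=\{x_1,\dots,x_k\}$, each message in $\mathbb{F}_2$. Receivers are pairs (demanded message, Has-set); $\mathcal{R}=R_1\cup R_2\cup R_3$ with $R_1=\{(x_i,B): B\in\mathcal{B}(\mathcal{M}), i=1,\dots,k\}$ (the receiver knows the messages in $B$); $R_2=\{(y,\sum_{y_j\in C\setminus\{y\}}y_j): C\in\mathfrak{C}(\mathcal{M}), y\in C\}$ (the receiver knows only the single sum $\sum_{y_j\in C\setminus\{y\}}y_j\in\mathbb{F}_2$); $R_3=\{(y_i,X): i=1,\dots,m\}$ (the receiver knows all of $x_1,\dots,x_k$). A scalar linear index code of length $l$ over $\mathbb{F}_2$ is a linear map $f:\mathbb{F}_2^{m+k}\to\mathbb{F}_2^l$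 applied to the vector of all messages such that each receiver can compute its demanded message from its Has-set and $f$ of the messages. With $\mu$ the maximum number of receivers having the same Has-set, the code is perfect if $l=\mu$. *)

theory Defs
  imports Complex_Main "HOL-Library.Z2" "HOL-Library.Function_Algebras"
begin

text \<open>The field F_2 is the type bit of HOL-Library.Z2.
  Ground set Y = {y_1,...,y_m} is encoded as the index set {0..<m} (y_{i+1} ~ index i).\<close>

definition ground :: "nat \<Rightarrow> nat set" where
  "ground m = {0..<m}"

definition matroid_rank :: "nat \<Rightarrow> (nat set \<Rightarrow> nat) \<Rightarrow> bool" where
  "matroid_rank m r \<longleftrightarrow>
     (\<forall>S. S \<subseteq> ground m \<longrightarrow> r S \<le> card S) \<and>
     (\<forall>S T. S \<subseteq> T \<and> T \<subseteq> ground m \<longrightarrow> r S \<le> r T) \<and>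
     (\<forall>S T. S \<subseteq> ground m \<and> T \<subseteq> ground m \<longrightarrow> r (S \<union> T) + r (S \<inter> T) \<le> r S + r T)"

definition indep :: "(nat set \<Rightarrow> nat) \<Rightarrow> nat set \<Rightarrow> bool" where
  "indep r S \<longleftrightarrow> r S = card S"

definition bases :: "nat \<Rightarrow> (nat set \<Rightarrow> nat) \<Rightarrow> nat set set" where
  "bases m r = {B. B \<subseteq> ground m \<and> indep r B \<and> r B = r (ground m)}"

definition circuits :: "nat \<Rightarrow> (nat set \<Rightarrow> nat) \<Rightarrow> nat set set" where
  "circuits m r = {C. C \<subseteq> ground m \<and> \<not> indep r C \<and> (\<forall>D. D \<subset> C \<longrightarrow> indep r D)}"

definition scale2 :: "bit \<Rightarrow> (nat \<Rightarrow> bit) \<Rightarrow> (nat \<Rightarrow> bit)" where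
  "scale2 c v = (\<lambda>j. c * v j)"

text \<open>Rank of a set of column vectors in F_2^n (vectors as nat => bit with zero entries
  beyond row n): the dimension of their span.\<close>
definition rank2 :: "(nat \<Rightarrow> bit) set \<Rightarrow> nat" where
  "rank2 V = vector_space.dim scale2 V"

text \<open>A matrix over F_2 with n rows whose columns are indexed by Y: column i is col i.\<close>
definition F2_representable :: "nat \<Rightarrow> (nat set \<Rightarrow> nat) \<Rightarrow> bool" where
  "F2_representable m r \<longleftrightarrow>
     (\<exists>(n::nat) (col :: nat \<Rightarrow> nat \<Rightarrow> bit).
        (\<forall>i j. n \<le> j \<longrightarrow> col i j = 0) \<and>
        (\<forall>S. S \<subseteq> ground m \<longrightarrow> rank2 (col ` S) = r S))"

text \<open>Messages Z = Y \<union> X are indexed by {0..<m+k}: y_{i+1} ~ index i (i < m),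
  x_{j+1} ~ index m+j (j < k). A message vector is w :: nat => bit (entries beyond m+k
  are irrelevant). A Has-set is represented as the set of linear functionals (coefficient
  vectors over the message indices) whose values the receiver knows. A receiver is a
  pair (index of demanded message, Has-set).\<close>

definition unit_vec :: "nat \<Rightarrow> nat \<Rightarrow> bit" where
  "unit_vec a = (\<lambda>s. if s = a then 1 else 0)"

definition indic :: "nat set \<Rightarrow> nat \<Rightarrow> bit" where
  "indic A = (\<lambda>s. if s \<in> A then 1 else 0)"

definition R1 :: "nat \<Rightarrow> (nat set \<Rightarrow> nat) \<Rightarrow> nat \<Rightarrow> (nat \<times> (nat \<Rightarrow> bit) set) set" where
  "R1 m r k = {(m + i, unit_vec ` B) | i B. i < k \<and> B \<in> bases m r}"

definition R2 :: "nat \<Rightarrow> (nat set \<Rightarrow> nat) \<Rightarrow> (nat \<times> (nat \<Rightarrow> bit) set) set" where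
  "R2 m r = {(y, {indic (C - {y})}) | y C. C \<in> circuits m r \<and> y \<in> C}"

definition R3 :: "nat \<Rightarrow> nat \<Rightarrow> (nat \<times> (nat \<Rightarrow> bit) set) set" where
  "R3 m k = {(i, unit_vec ` {m..<m+k}) | i. i < m}"

definition receivers :: "nat \<Rightarrow> (nat set \<Rightarrow> nat) \<Rightarrow> nat \<Rightarrow> (nat \<times> (nat \<Rightarrow> bit) set) set" where
  "receivers m r k = R1 m r k \<union> R2 m r \<union> R3 m k"

definition mu :: "(nat \<times> (nat \<Rightarrow> bit) set) set \<Rightarrow> nat" where
  "mu R = Max {card {d. (d, H) \<in> R} | H. \<exists>d. (d, H) \<in> R}"

definition lin_eval :: "nat \<Rightarrow> (nat \<Rightarrow> bit) \<Rightarrow> (nat \<Rightarrow> bit) \<Rightarrow> bit" where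
  "lin_eval N h w = (\<Sum>s<N. h s * w s)"

definition encode :: "nat \<Rightarrow> nat \<Rightarrow> (nat \<Rightarrow> nat \<Rightarrow> bit) \<Rightarrow> (nat \<Rightarrow> bit) \<Rightarrow> (nat \<Rightarrow> bit)" where
  "encode N l L w = (\<lambda>t. if t < l then (\<Sum>s<N. L t s * w s) else 0)"

definition known :: "nat \<Rightarrow> (nat \<Rightarrow> bit) set \<Rightarrow> (nat \<Rightarrow> bit) \<Rightarrow> ((nat \<Rightarrow> bit) \<Rightarrow> bit)" where
  "known N H w = (\<lambda>h. if h \<in> H then lin_eval N h w else 0)"

definition is_index_code :: "nat \<Rightarrow> (nat \<times> (nat \<Rightarrow> bit) set) set \<Rightarrow> nat \<Rightarrow> (nat \<Rightarrow> nat \<Rightarrow> bit) \<Rightarrow> bool" where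
  "is_index_code N R l L \<longleftrightarrow>
     (\<forall>(d, H) \<in> R. \<exists>g. \<forall>w :: nat \<Rightarrow> bit. g (known N H w) (encode N l L w) = w d)"

definition perfect_scalar_linear_code_exists :: "nat \<Rightarrow> (nat \<times> (nat \<Rightarrow> bit) set) set \<Rightarrow> bool" where
  "perfect_scalar_linear_code_exists N R \<longleftrightarrow> (\<exists>L. is_index_code N R (mu R) L)"

end

theory Submission
  imports Defs "HOL-Library.FuncSet"
begin

text \<open>Given a representation with columns v_y, a perfect code of length m sends, for each y,
  the message y plus the value at v_y of the linear functional that maps a basis of the column
  space to the x-messages. A receiver knowing a basis B recovers every x because the columns of
  B span, a receiver knowing the x's recovers every y directly, and a circuit receiver uses that
  the columns of a circuit sum to zero.

  Conversely, let K be the kernel of a perfect code, i.e. the message vectors encoded to 0;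
  counting gives card K \<ge> 2^k. The receivers in R1 and R3 force a kernel vector vanishing on a
  basis to vanish, so restriction to any basis maps K bijectively onto all bit vectors on it,
  and those in R2 force every kernel vector to have even weight on each circuit. Consequently a
  set of columns of the matrix whose rows are the elements of K is independent exactly when it
  is independent in the matroid, so this matrix represents it.\<close>

(* Keep + and * on bit as field operations instead of rewriting them to xor and conjunction. *)
declare add_bit_eq_xor[simp del] mult_bit_eq_and[simp del]

interpretation V2: vector_space scale2
  by unfold_locales (auto simp: scale2_def fun_eq_iff algebra_simps)

lemma bit_add_eq_0_iff: "(a::bit) + b = 0 \<longleftrightarrow> a = b"
  by (cases a; cases b) auto

lemma sum_fun_apply: "(sum f S) x = (\<Sum>j\<in>S. f j x)"
  by (induction S rule: infinite_finite_induct) auto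

definition independent_family :: "(nat \<Rightarrow> nat \<Rightarrow> bit) \<Rightarrow> nat set \<Rightarrow> bool" where
  "independent_family col S \<longleftrightarrow>
     (\<forall>c. (\<Sum>j\<in>S. scale2 (c j) (col j)) = 0 \<longrightarrow> (\<forall>j\<in>S. c j = 0))"

lemma independent_family_inj_on:
  assumes "finite S" "independent_family col S"
  shows "inj_on col S"
proof (rule inj_onI, rule ccontr)
  fix a b assume ab: "a \<in> S" "b \<in> S" "col a = col b" "a \<noteq> b"
  let ?c = "\<lambda>j. if j = a \<or> j = b then (1::bit) else 0"
  have "(\<Sum>j\<in>S. scale2 (?c j) (col j)) = (\<Sum>j\<in>{a,b}. scale2 (?c j) (col j))"
    by (rule sum.mono_neutral_right) (use assms ab in auto)
  also have "\<dots> = 0" using ab by (simp add: fun_eq_iff)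
  finally show False using assms(2) ab unfolding independent_family_def by force
qed

lemma independent_family_imp_independent:
  assumes "finite S" "independent_family col S"
  shows "V2.independent (col ` S)"
proof (rule V2.independent_if_scalars_zero)
  show "finite (col ` S)" using assms by simp
  have inj: "inj_on col S" using independent_family_inj_on[OF assms] .
  fix c v assume "(\<Sum>v\<in>col ` S. scale2 (c v) v) = 0" "v \<in> col ` S"
  then show "c v = 0"
    using assms(2) by (auto simp: sum.reindex[OF inj] independent_family_def)
qed

lemma independent_imp_independent_family:
  assumes "finite S" "inj_on col S" "V2.independent (col ` S)"
  shows "independent_family col S"
  unfolding independent_family_def
proof (intro allI impI ballI)
  fix c j assume sum0: "(\<Sum>j\<in>S. scale2 (c j) (col j)) = 0" and j: "j \<in> S"
  let ?d = "\<lambda>v. c (the_inv_into S col v)"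
  have "(\<Sum>v\<in>col ` S. scale2 (?d v) v) = 0"
    using sum0 by (simp add: sum.reindex[OF assms(2)] the_inv_into_f_f[OF assms(2)])
  then have "?d (col j) = 0"
    using j by (intro V2.independentD[OF assms(3)]) (auto simp: assms(1))
  then show "c j = 0" by (simp add: the_inv_into_f_f[OF assms(2) j])
qed

lemma independent_family_iff_dim:
  assumes "finite S"
  shows "independent_family col S \<longleftrightarrow> V2.dim (col ` S) = card S"
proof
  assume "independent_family col S"
  then show "V2.dim (col ` S) = card S"
    using assms independent_family_inj_on independent_family_imp_independent
    by (simp add: V2.dim_eq_card_independent card_image)
next
  assume dim: "V2.dim (col ` S) = card S"
  obtain B where B: "B \<subseteq> col ` S" "V2.independent B" "col ` S \<subseteq> V2.span B"
    "card B = V2.dim (col ` S)"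
    using V2.basis_exists by blast
  have "card B \<le> card (col ` S)" "card (col ` S) \<le> card S"
    using B(1) assms by (simp_all add: card_mono card_image_le)
  then have "card (col ` S) = card S" "B = col ` S"
    using B(1,4) dim assms by (simp_all add: card_subset_eq)
  then show "independent_family col S"
    using B(2) assms eq_card_imp_inj_on by (intro independent_imp_independent_family) auto
qed

lemma V2_dim_subset_finite:
  assumes "finite T" "S \<subseteq> T"
  shows "V2.dim S \<le> V2.dim T"
proof -
  obtain B where B: "B \<subseteq> T" "V2.independent B" "T \<subseteq> V2.span B" "card B = V2.dim T"
    by (rule V2.basis_exists)
  have "finite B" using B(1) assms(1) by (rule finite_subset)
  then show ?thesis
    using B(3,4) assms(2) V2.dim_le_card[of S B] by auto
qed

lemma exists_matrix_with_rows:
  assumes "finite K"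
  obtains n col where "\<forall>i j. n \<le> j \<longrightarrow> col i j = (0::bit)"
    and "\<And>S c. (\<Sum>j\<in>S. scale2 (c j) (col j)) = 0 \<longleftrightarrow> (\<forall>w\<in>K. (\<Sum>j\<in>S. c j * w j) = 0)"
proof -
  define n where "n = card K"
  obtain row where "bij_betw row {..<n} K"
    using ex_bij_betw_nat_finite[OF assms] by (auto simp: n_def lessThan_atLeast0)
  then have K: "K = row ` {..<n}" by (simp add: bij_betw_def)
  define col where "col i t = (if t < n then row t i else 0)" for i t
  have "(\<Sum>j\<in>S. scale2 (c j) (col j)) = 0 \<longleftrightarrow> (\<forall>w\<in>K. (\<Sum>j\<in>S. c j * w j) = 0)" for S c
  proof -
    have "(\<Sum>j\<in>S. scale2 (c j) (col j)) t = (if t < n then (\<Sum>j\<in>S. c j * row t j) else 0)"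
      for t by (simp add: sum_fun_apply scale2_def col_def)
    then show ?thesis by (auto simp: fun_eq_iff K)
  qed
  moreover have "\<forall>i j. n \<le> j \<longrightarrow> col i j = 0" by (simp add: col_def)
  ultimately show ?thesis using that by blast
qed

lemma finite_ground [simp]: "finite (ground m)"
  by (simp add: ground_def)

lemma finite_subset_ground: "S \<subseteq> ground m \<Longrightarrow> finite S"
  by (rule finite_subset[OF _ finite_ground])

lemma circuit_subset_ground: "C \<in> circuits m r \<Longrightarrow> C \<subseteq> ground m"
  unfolding circuits_def by blast

lemma basis_subset_ground: "B \<in> bases m r \<Longrightarrow> B \<subseteq> ground m"
  unfolding bases_def by blast

lemma card_basis: "B \<in> bases m r \<Longrightarrow> card B = r (ground m)"
  unfolding bases_def indep_def by simp

locale rank_matroid =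
  fixes m :: nat and r :: "nat set \<Rightarrow> nat"
  assumes matroid: "matroid_rank m r"
begin

lemma rank_le_card: "S \<subseteq> ground m \<Longrightarrow> r S \<le> card S"
  using matroid by (simp add: matroid_rank_def)

lemma rank_mono: "S \<subseteq> T \<Longrightarrow> T \<subseteq> ground m \<Longrightarrow> r S \<le> r T"
  using matroid by (simp add: matroid_rank_def)

lemma rank_submod:
  "S \<subseteq> ground m \<Longrightarrow> T \<subseteq> ground m \<Longrightarrow> r (S \<union> T) + r (S \<inter> T) \<le> r S + r T"
  using matroid by (simp add: matroid_rank_def)

lemma rank_empty [simp]: "r {} = 0"
  using rank_le_card[of "{}"] by simp

lemma rank_ground_le: "r (ground m) \<le> m"
  using rank_le_card[of "ground m"] by (simp add: ground_def)

lemma indep_empty: "indep r {}"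
  by (simp add: indep_def)

lemma rank_insert_le:
  assumes "insert e S \<subseteq> ground m" "e \<notin> S"
  shows "r (insert e S) \<le> r S + 1"
proof -
  have "r (S \<union> {e}) + r (S \<inter> {e}) \<le> r S + r {e}"
    using assms by (intro rank_submod) auto
  moreover have "r {e} \<le> 1" using rank_le_card[of "{e}"] assms by simp
  ultimately show ?thesis using assms(2) by simp
qed

lemma indep_insert_if_rank_increases:
  assumes S: "insert e S \<subseteq> ground m" and e: "e \<notin> S" and inc: "r (insert e S) = r S + 1"
    and I: "I \<subseteq> S" "indep r I" "card I = r S"
  shows "indep r (insert e I)"
proof -
  have "r (insert e I \<union> S) + r (insert e I \<inter> S) \<le> r (insert e I) + r S"
    using S I(1) by (intro rank_submod) auto
  moreover have "insert e I \<union> S = insert e S" "insert e I \<inter> S = I" using I(1) e by auto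
  ultimately have "card I + 1 \<le> r (insert e I)" using inc I(2,3) by (simp add: indep_def)
  moreover have "r (insert e I) \<le> card (insert e I)" using S I(1) by (intro rank_le_card) auto
  moreover have "finite I" using S I(1) by (intro finite_subset_ground) auto
  moreover have "e \<notin> I" using I(1) e by blast
  ultimately show ?thesis by (simp add: indep_def)
qed

lemma indep_extend:
  assumes "finite T" "J \<union> T \<subseteq> ground m" "indep r J"
  shows "\<exists>I. J \<subseteq> I \<and> I \<subseteq> J \<union> T \<and> indep r I \<and> card I = r (J \<union> T)"
  using assms
proof (induction T rule: finite_induct)
  case empty
  then show ?case by (auto simp: indep_def)
next
  case (insert e T)
  then obtain I where I: "J \<subseteq> I" "I \<subseteq> J \<union> T" "indep r I" "card I = r (J \<union> T)"
    by blast
  show ?case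
  proof (cases "e \<in> J \<union> T \<or> r (insert e (J \<union> T)) = r (J \<union> T)")
    case True
    then have "r (J \<union> insert e T) = r (J \<union> T)" by (auto simp: insert_absorb)
    then show ?thesis using I by auto
  next
    case False
    have S: "insert e (J \<union> T) \<subseteq> ground m" using insert.prems(1) by simp
    have "r (J \<union> T) \<le> r (insert e (J \<union> T))" using S by (intro rank_mono) auto
    moreover have "r (insert e (J \<union> T)) \<le> r (J \<union> T) + 1"
      using S False by (intro rank_insert_le) auto
    ultimately have inc: "r (insert e (J \<union> T)) = r (J \<union> T) + 1" using False by linarith
    have "finite I" using I(2) S by (intro finite_subset_ground) auto
    moreover have "e \<notin> I" using I(2) False by blast
    ultimately have "card (insert e I) = r (J \<union> insert e T)"
      using I(4) inc by simp
    moreover have "indep r (insert e I)"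
      using S False inc I(2-4) by (intro indep_insert_if_rank_increases) auto
    ultimately show ?thesis using I(1,2) by (intro exI[of _ "insert e I"]) auto
  qed
qed

lemma indep_subset_of_rank:
  assumes "S \<subseteq> ground m"
  obtains I where "I \<subseteq> S" "indep r I" "card I = r S"
  using indep_extend[of S "{}"] assms finite_subset_ground indep_empty by auto

lemma indep_extend_basis:
  assumes "J \<subseteq> ground m" "indep r J"
  obtains B where "J \<subseteq> B" "B \<in> bases m r"
proof -
  obtain I where "J \<subseteq> I" "I \<subseteq> ground m" "indep r I" "card I = r (ground m)"
    using indep_extend[of "ground m" J] assms by (auto simp: Un_absorb1)
  then show ?thesis using that unfolding bases_def indep_def by auto
qed

lemma dependent_contains_circuit:
  assumes J: "J \<subseteq> ground m" "\<not> indep r J"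
  obtains C where "C \<subseteq> J" "C \<in> circuits m r"
proof -
  let ?A = "{D. D \<subseteq> J \<and> \<not> indep r D}"
  have "finite ?A" using finite_subset_ground[OF J(1)] by (simp add: finite_Collect_subsets)
  then obtain C where C: "C \<in> ?A" and min: "\<And>D. D \<in> ?A \<Longrightarrow> D \<subseteq> C \<Longrightarrow> C = D"
    using finite_has_minimal2[of ?A J] J by auto
  have "indep r D" if "D \<subset> C" for D
    using min[of D] C that by blast
  then show ?thesis using that C J(1) unfolding circuits_def by auto
qed

lemma circuit_nonempty: "C \<in> circuits m r \<Longrightarrow> C \<noteq> {}"
  unfolding circuits_def using indep_empty by blast

lemma dim_eq_rank_if_same_independent_sets:
  assumes same: "\<And>J. J \<subseteq> ground m \<Longrightarrow> indep r J \<longleftrightarrow> independent_family col J"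
    and S: "S \<subseteq> ground m"
  shows "V2.dim (col ` S) = r S"
proof (rule antisym)
  have fin: "finite S" using S by (rule finite_subset_ground)
  obtain Bs where Bs: "Bs \<subseteq> col ` S" "V2.independent Bs" "col ` S \<subseteq> V2.span Bs"
    "card Bs = V2.dim (col ` S)"
    by (rule V2.basis_exists)
  obtain J where J: "J \<subseteq> S" "inj_on col J" "Bs = col ` J"
    using Bs(1) unfolding subset_image_inj by blast
  have "independent_family col J"
    using J Bs(2) finite_subset[OF J(1) fin] by (intro independent_imp_independent_family) auto
  then have "r J = card J" using same J(1) S by (simp add: indep_def)
  also have "\<dots> = V2.dim (col ` S)" using J(2,3) Bs(4) by (simp add: card_image)
  finally show "V2.dim (col ` S) \<le> r S" using rank_mono[OF J(1) S] by simp
next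
  obtain I where I: "I \<subseteq> S" "indep r I" "card I = r S"
    using indep_subset_of_rank[OF S] .
  have fin: "finite S" using S by (rule finite_subset_ground)
  have "V2.dim (col ` I) = card I"
    using same I S finite_subset[OF I(1) fin] by (simp add: independent_family_iff_dim)
  moreover have "V2.dim (col ` I) \<le> V2.dim (col ` S)"
    using I(1) fin by (intro V2_dim_subset_finite) auto
  ultimately show "r S \<le> V2.dim (col ` S)" using I(3) by simp
qed

end

lemma UNIV_bit: "(UNIV :: bit set) = {0, 1}"
  by (auto intro: bit.exhaust)

lemma finite_card_supported_functions:
  assumes "finite B"
  shows "finite {z :: nat \<Rightarrow> bit. \<forall>j. j \<notin> B \<longrightarrow> z j = 0}"
    and "card {z :: nat \<Rightarrow> bit. \<forall>j. j \<notin> B \<longrightarrow> z j = 0} = 2 ^ card B"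
proof -
  let ?Z = "{z :: nat \<Rightarrow> bit. \<forall>j. j \<notin> B \<longrightarrow> z j = 0}"
  have "bij_betw (\<lambda>z. restrict z B) ?Z (B \<rightarrow>\<^sub>E UNIV)"
  proof (rule bij_betwI')
    fix z z' assume "z \<in> ?Z" "z' \<in> ?Z"
    then show "(restrict z B = restrict z' B) = (z = z')"
      by (auto simp: fun_eq_iff restrict_def) metis
  next
    fix f :: "nat \<Rightarrow> bit" assume f: "f \<in> B \<rightarrow>\<^sub>E UNIV"
    show "\<exists>z\<in>?Z. f = restrict z B"
      using f by (intro bexI[of _ "\<lambda>j. if j \<in> B then f j else 0"]) (auto simp: fun_eq_iff)
  qed simp
  moreover have "finite (B \<rightarrow>\<^sub>E (UNIV :: bit set))" "card (B \<rightarrow>\<^sub>E (UNIV :: bit set)) = 2 ^ card B"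
    using assms by (simp_all add: finite_PiE card_PiE UNIV_bit numeral_2_eq_2)
  ultimately show "finite ?Z" "card ?Z = 2 ^ card B"
    by (simp_all add: bij_betw_finite bij_betw_same_card)
qed

lemma lin_eval_add: "lin_eval N h (w + w') = lin_eval N h w + lin_eval N h w'"
  by (simp add: lin_eval_def distrib_left sum.distrib)

lemma encode_add: "encode N l L (w + w') = encode N l L w + encode N l L w'"
  by (simp add: encode_def fun_eq_iff distrib_left sum.distrib)

lemma sum_lessThan_add: "(\<Sum>s<m + k. g s) = (\<Sum>s<m. g s) + (\<Sum>i<k. g (m + i))"
  for g :: "nat \<Rightarrow> 'a::comm_monoid_add"
  by (induction k) (simp_all add: add.assoc)

lemma unit_vec_times: "unit_vec a s * x = (if s = a then x else 0)"
  by (simp add: unit_vec_def)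

lemma lin_eval_indic: "D \<subseteq> {..<N} \<Longrightarrow> lin_eval N (indic D) w = (\<Sum>j\<in>D. w j)"
  by (simp add: lin_eval_def indic_def if_distrib if_distribR sum.If_cases Int_absorb1)

lemma lin_eval_unit_vec: "a < N \<Longrightarrow> lin_eval N (unit_vec a) w = w a"
  using lin_eval_indic[of "{a}" N w] by (simp add: unit_vec_def indic_def)

lemma is_index_code_iff_kernel:
  "is_index_code N R l L \<longleftrightarrow>
     (\<forall>(d, H) \<in> R. \<forall>w. (\<forall>h\<in>H. lin_eval N h w = 0) \<longrightarrow> encode N l L w = 0 \<longrightarrow> w d = 0)"
proof
  assume "is_index_code N R l L"
  show "\<forall>(d, H) \<in> R. \<forall>w. (\<forall>h\<in>H. lin_eval N h w = 0) \<longrightarrow> encode N l L w = 0 \<longrightarrow> w d = 0"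
  proof (intro ballI allI impI, clarify)
    fix d H w
    assume "(d, H) \<in> R"
    then obtain g where g: "\<And>w. g (known N H w) (encode N l L w) = w d"
      using \<open>is_index_code N R l L\<close> unfolding is_index_code_def by blast
    assume "\<forall>h\<in>H. lin_eval N h w = 0" "encode N l L w = 0"
    then have "known N H w = known N H 0" "encode N l L w = encode N l L 0"
      by (auto simp: known_def fun_eq_iff lin_eval_def encode_def)
    then show "w d = 0" using g[of w] g[of 0] by simp
  qed
next
  assume ker: "\<forall>(d, H) \<in> R. \<forall>w. (\<forall>h\<in>H. lin_eval N h w = 0) \<longrightarrow> encode N l L w = 0 \<longrightarrow> w d = 0"
  show "is_index_code N R l L"
    unfolding is_index_code_def
  proof clarify
    fix d H assume dH: "(d, H) \<in> R"
    define g where "g kn c = (SOME w'. known N H w' = kn \<and> encode N l L w' = c) d" for kn c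
    have "g (known N H w) (encode N l L w) = w d" for w
    proof -
      define w' where "w' = (SOME w'. known N H w' = known N H w \<and> encode N l L w' = encode N l L w)"
      have "known N H w' = known N H w \<and> encode N l L w' = encode N l L w"
        unfolding w'_def by (rule someI[of _ w]) simp
      then have "\<forall>h\<in>H. lin_eval N h (w + w') = 0" "encode N l L (w + w') = 0"
        unfolding known_def lin_eval_add encode_add
        by (metis (full_types) bit_add_eq_0_iff, simp add: fun_eq_iff bit_add_eq_0_iff)
      then have "(w + w') d = 0" using ker dH by blast
      then show ?thesis by (simp add: g_def w'_def[symmetric] bit_add_eq_0_iff)
    qed
    then show "\<exists>g. \<forall>w. g (known N H w) (encode N l L w) = w d" by blast
  qed
qed

definition code_kernel :: "nat \<Rightarrow> nat \<Rightarrow> (nat \<Rightarrow> nat \<Rightarrow> bit) \<Rightarrow> (nat \<Rightarrow> bit) set" where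
  "code_kernel N l L = {w. (\<forall>s. s \<notin> {..<N} \<longrightarrow> w s = 0) \<and> encode N l L w = 0}"

lemma finite_code_kernel: "finite (code_kernel N l L)"
  unfolding code_kernel_def
  by (rule finite_subset[OF _ finite_card_supported_functions(1)[of "{..<N}"]]) auto

lemma code_kernel_add:
  "w \<in> code_kernel N l L \<Longrightarrow> w' \<in> code_kernel N l L \<Longrightarrow> w + w' \<in> code_kernel N l L"
  unfolding code_kernel_def by (simp add: encode_add)

text \<open>Each fibre of the encoding map is a translate of the kernel.\<close>

lemma card_code_kernel: "2 ^ N \<le> 2 ^ l * card (code_kernel N l L)"
proof -
  let ?D = "{w :: nat \<Rightarrow> bit. \<forall>s. s \<notin> {..<N} \<longrightarrow> w s = 0}"
  let ?E = "{c :: nat \<Rightarrow> bit. \<forall>t. t \<notin> {..<l} \<longrightarrow> c t = 0}"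
  let ?K = "code_kernel N l L"
  let ?F = "\<lambda>c. {w \<in> ?D. encode N l L w = c}"
  have fin_D: "finite ?D" and fin_E: "finite ?E"
    using finite_card_supported_functions(1) by blast+
  have fibre: "card (?F c) \<le> card ?K" for c
  proof (cases "?F c = {}")
    case False
    then obtain w0 where w0: "w0 \<in> ?F c" by blast
    have "?F c \<subseteq> (\<lambda>w. w + w0) ` ?K"
    proof
      fix w assume "w \<in> ?F c"
      then have "w + w0 \<in> ?K" "w = (w + w0) + w0"
        using w0 by (auto simp: code_kernel_def encode_add fun_eq_iff add.assoc)
      then show "w \<in> (\<lambda>w. w + w0) ` ?K" by blast
    qed
    then have "card (?F c) \<le> card ((\<lambda>w. w + w0) ` ?K)"
      using finite_code_kernel by (intro card_mono) auto
    also have "\<dots> \<le> card ?K" using finite_code_kernel by (rule card_image_le)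
    finally show ?thesis .
  qed (simp only: card.empty)
  have "?D \<subseteq> (\<Union>c\<in>?E. ?F c)" by (auto simp: encode_def)
  then have "card ?D \<le> card (\<Union>c\<in>?E. ?F c)"
    using fin_D fin_E by (intro card_mono) auto
  also have "\<dots> \<le> (\<Sum>c\<in>?E. card (?F c))" using fin_E by (rule card_UN_le)
  also have "\<dots> \<le> card ?E * card ?K" using sum_bounded_above[of ?E, OF fibre] by simp
  finally show ?thesis
    using finite_card_supported_functions(2)[of "{..<N}"] finite_card_supported_functions(2)[of "{..<l}"]
    by simp
qed

lemma receivers_cases:
  assumes "(d, H) \<in> receivers m r k"
  obtains (R1) i B where "d = m + i" "H = unit_vec ` B" "i < k" "B \<in> bases m r"
    | (R2) C where "C \<in> circuits m r" "d \<in> C" "H = {indic (C - {d})}"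
    | (R3) "d < m" "H = unit_vec ` {m..<m+k}"
  using assms unfolding receivers_def R1_def R2_def R3_def by blast

lemma inj_unit_vec: "inj unit_vec"
  by (rule injI) (metis unit_vec_def zero_neq_one)

lemma indic_eq_unit_vec_iff: "indic D = unit_vec a \<longleftrightarrow> D = {a}"
  by (auto simp: indic_def unit_vec_def fun_eq_iff split: if_splits)

locale rank_k_matroid = rank_matroid +
  fixes k :: nat
  assumes rank_ground: "r (ground m) = k"
begin

abbreviation demanders :: "(nat \<Rightarrow> bit) set \<Rightarrow> nat set" where
  "demanders H \<equiv> {d. (d, H) \<in> receivers m r k}"

lemma k_le_m: "k \<le> m"
  using rank_ground_le rank_ground by simp

lemma card_basis_k: "B \<in> bases m r \<Longrightarrow> card B = k"
  using card_basis rank_ground by simp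

lemma demanders_X_has_set: "demanders (unit_vec ` {m..<m+k}) = {..<m}"
proof (intro equalityI subsetI)
  fix d assume "d \<in> demanders (unit_vec ` {m..<m+k})"
  then have "(d, unit_vec ` {m..<m+k}) \<in> receivers m r k" by simp
  then show "d \<in> {..<m}"
  proof (cases rule: receivers_cases)
    case (R1 i B)
    then have "B = {m..<m+k}" using inj_image_eq_iff[OF inj_unit_vec] by metis
    then show ?thesis using R1 basis_subset_ground[of B m r] by (auto simp: ground_def)
  next
    case (R2 C)
    then show ?thesis using circuit_subset_ground[of C m r] by (auto simp: ground_def)
  qed auto
qed (auto simp: receivers_def R3_def)

lemma demanders_basis_has_set:
  assumes B0: "B0 \<in> bases m r" and H: "unit_vec ` B0 \<noteq> unit_vec ` {m..<m+k}"
    and d: "(d, unit_vec ` B0) \<in> receivers m r k"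
  shows "d \<in> {m..<m+k} \<union> (ground m - B0)"
  using d
proof (cases rule: receivers_cases)
  case (R2 C)
  then have eq: "unit_vec ` B0 = {indic (C - {d})}" by simp
  then have "indic (C - {d}) \<in> unit_vec ` B0" by simp
  then obtain a where a: "a \<in> B0" "indic (C - {d}) = unit_vec a" by blast
  have "b = a" if "b \<in> B0" for b
  proof -
    have "unit_vec b \<in> {indic (C - {d})}" using eq that by blast
    then have "unit_vec b = unit_vec a" using a(2) by simp
    then show ?thesis by (rule injD[OF inj_unit_vec])
  qed
  then have "B0 = {a}" using a(1) by blast
  moreover have "C - {d} = {a}" using a(2) by (simp only: indic_eq_unit_vec_iff)
  ultimately show ?thesis using R2(1,2) circuit_subset_ground[of C m r] by auto
qed (use H in auto)

lemma demanders_subset_ground: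
  assumes "H \<noteq> unit_vec ` {m..<m+k}" "H \<notin> (`) unit_vec ` bases m r"
  shows "demanders H \<subseteq> ground m"
proof
  fix d assume "d \<in> demanders H"
  then have "(d, H) \<in> receivers m r k" by simp
  then show "d \<in> ground m"
  proof (cases rule: receivers_cases)
    case (R2 C)
    then show ?thesis using circuit_subset_ground[of C m r] by auto
  qed (use assms in auto)
qed

lemma card_demanders_le: "card (demanders H) \<le> m"
proof (cases "H = unit_vec ` {m..<m+k}")
  case True
  then show ?thesis using demanders_X_has_set by simp
next
  case not_X: False
  show ?thesis
  proof (cases "H \<in> (`) unit_vec ` bases m r")
    case True
    then obtain B0 where B0: "B0 \<in> bases m r" "H = unit_vec ` B0" by blast
    have "card (ground m - B0) = m - k"
      using basis_subset_ground[OF B0(1)] card_basis_k[OF B0(1)] finite_subset_ground[of B0 m]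
      by (simp add: card_Diff_subset ground_def)
    have "demanders H \<subseteq> {m..<m+k} \<union> (ground m - B0)"
      using demanders_basis_has_set[OF B0(1)] B0(2) not_X by blast
    then have "card (demanders H) \<le> card ({m..<m+k} \<union> (ground m - B0))"
      by (intro card_mono) auto
    also have "\<dots> \<le> k + (m - k)"
      using card_Un_le[of "{m..<m+k}" "ground m - B0"] \<open>card (ground m - B0) = m - k\<close> by simp
    finally show ?thesis using k_le_m by simp
  next
    case False
    have "card (demanders H) \<le> card (ground m)"
      using demanders_subset_ground[OF not_X False] by (intro card_mono) auto
    then show ?thesis by (simp add: ground_def)
  qed
qed

(* For m = 0 there are no receivers and mu is the maximum of the empty set. *)
lemma mu_receivers:
  assumes "m > 0"
  shows "mu (receivers m r k) = m"
proof -
  let ?C = "{card (demanders H) | H. \<exists>d. (d, H) \<in> receivers m r k}"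
  have "(0, unit_vec ` {m..<m+k}) \<in> receivers m r k"
    using demanders_X_has_set assms by blast
  then have "card (demanders (unit_vec ` {m..<m+k})) \<in> ?C" by blast
  then have "m \<in> ?C" by (simp only: demanders_X_has_set card_lessThan)
  moreover have "\<forall>c\<in>?C. c \<le> m" using card_demanders_le by blast
  ultimately show ?thesis
    unfolding mu_def by (metis (no_types, lifting) Max_eqI finite_nat_set_iff_bounded_le)
qed

lemma receivers_empty: "m = 0 \<Longrightarrow> receivers m r k = {}"
  using k_le_m circuit_nonempty circuit_subset_ground[of _ m r]
  by (fastforce simp: receivers_def R1_def R2_def R3_def ground_def)

end

locale F2_represented = rank_k_matroid +
  fixes col :: "nat \<Rightarrow> nat \<Rightarrow> bit"
  assumes represents: "S \<subseteq> ground m \<Longrightarrow> V2.dim (col ` S) = r S"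
begin

lemma indep_iff_independent_family: "J \<subseteq> ground m \<Longrightarrow> indep r J \<longleftrightarrow> independent_family col J"
  using represents finite_subset_ground by (simp add: indep_def independent_family_iff_dim eq_commute)

lemma circuit_columns_sum_zero:
  assumes C: "C \<in> circuits m r"
  shows "(\<Sum>j\<in>C. col j) = 0"
proof -
  have C_ground: "C \<subseteq> ground m" using circuit_subset_ground[OF C] .
  then have fin: "finite C" by (rule finite_subset_ground)
  have "\<not> independent_family col C"
    using C C_ground indep_iff_independent_family unfolding circuits_def by blast
  then obtain c j0 where c: "(\<Sum>j\<in>C. scale2 (c j) (col j)) = 0" and j0: "j0 \<in> C" "c j0 = 1"
    unfolding independent_family_def by auto
  have "c j = 1" if j: "j \<in> C" for j
  proof (rule ccontr)
    assume "c j \<noteq> 1"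
    then have "(\<Sum>i\<in>C - {j}. scale2 (c i) (col i)) = 0"
      using c sum.remove[OF fin j, of "\<lambda>i. scale2 (c i) (col i)"] by simp
    moreover have "independent_family col (C - {j})"
      using C C_ground j indep_iff_independent_family[of "C - {j}"]
      unfolding circuits_def by blast
    moreover have "j0 \<in> C - {j}" using j0 \<open>c j \<noteq> 1\<close> by auto
    ultimately show False using j0 unfolding independent_family_def by auto
  qed
  then show ?thesis using c by simp
qed

lemma basis_columns_span:
  assumes B: "B \<in> bases m r" and x: "x \<in> ground m"
  shows "col x \<in> V2.span (col ` B)"
proof (rule ccontr)
  assume x_out: "col x \<notin> V2.span (col ` B)"
  have B_ground: "B \<subseteq> ground m" using basis_subset_ground[OF B] .
  have fin: "finite B" using B_ground by (rule finite_subset_ground)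
  have "independent_family col B"
    using B B_ground indep_iff_independent_family unfolding bases_def by blast
  then have "V2.independent (insert (col x) (col ` B))" "inj_on col (insert x B)"
    using x_out fin V2.independent_insertI V2.span_base
    by (auto simp: independent_family_imp_independent independent_family_inj_on)
  then have "indep r (insert x B)"
    using fin x B_ground indep_iff_independent_family[of "insert x B"]
    by (simp add: independent_imp_independent_family)
  moreover have "x \<notin> B" using x_out V2.span_base by blast
  moreover have "r (insert x B) \<le> r (ground m)" using x B_ground by (intro rank_mono) auto
  ultimately show False
    using B fin unfolding bases_def indep_def by simp
qed

end

locale F2_coordinatised = F2_represented +
  fixes Bv :: "(nat \<Rightarrow> bit) set" and e :: "nat \<Rightarrow> nat \<Rightarrow> bit"
  assumes Bv_columns: "Bv \<subseteq> col ` ground m"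
    and independent_Bv: "V2.independent Bv"
    and columns_in_span: "col ` ground m \<subseteq> V2.span Bv"
    and enumerates_Bv: "bij_betw e {..<k} Bv"
begin

definition coord_functional :: "(nat \<Rightarrow> bit) \<Rightarrow> (nat \<Rightarrow> bit) \<Rightarrow> bit" where
  "coord_functional x v = (\<Sum>i<k. V2.representation Bv v (e i) * x i)"

lemma coord_functional_add:
  "u \<in> V2.span Bv \<Longrightarrow> v \<in> V2.span Bv \<Longrightarrow>
    coord_functional x (u + v) = coord_functional x u + coord_functional x v"
  unfolding coord_functional_def
  by (simp add: V2.representation_add[OF independent_Bv] distrib_right sum.distrib)

lemma coord_functional_scale:
  "v \<in> V2.span Bv \<Longrightarrow> coord_functional x (scale2 c v) = c * coord_functional x v"
  unfolding coord_functional_def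
  by (simp add: V2.representation_scale[OF independent_Bv] sum_distrib_left mult.assoc)

lemma coord_functional_zero [simp]: "coord_functional x 0 = 0"
  by (simp add: coord_functional_def V2.representation_zero)

lemma coord_functional_basis: "i < k \<Longrightarrow> coord_functional x (e i) = x i"
proof -
  assume i: "i < k"
  have inj: "inj_on e {..<k}" and ei: "e i \<in> Bv"
    using enumerates_Bv i by (auto simp: bij_betw_def)
  have "coord_functional x (e i) = (\<Sum>j<k. if j = i then x j else 0)"
    unfolding coord_functional_def V2.representation_basis[OF independent_Bv ei]
    using i inj by (intro sum.cong) (auto dest: inj_onD)
  then show ?thesis using i by simp
qed

lemma coord_functional_sum:
  "finite I \<Longrightarrow> g ` I \<subseteq> V2.span Bv \<Longrightarrow>
    coord_functional x (sum g I) = (\<Sum>j\<in>I. coord_functional x (g j))"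
  by (induction I rule: finite_induct) (simp_all add: coord_functional_add V2.span_sum image_subset_iff)

lemma coord_functional_vanishes_on_span:
  assumes "S \<subseteq> V2.span Bv" "\<forall>v\<in>S. coord_functional x v = 0" "v \<in> V2.span S"
  shows "coord_functional x v = 0"
proof -
  have "V2.subspace {v \<in> V2.span Bv. coord_functional x v = 0}"
    by (auto intro!: V2.subspaceI simp: V2.span_zero V2.span_add V2.span_scale
        coord_functional_add coord_functional_scale)
  then have "V2.span S \<subseteq> {v \<in> V2.span Bv. coord_functional x v = 0}"
    using assms(1,2) by (intro V2.span_minimal) auto
  then show ?thesis using assms(3) by blast
qed

definition code_matrix :: "nat \<Rightarrow> nat \<Rightarrow> bit" where
  "code_matrix t s = (if s < m then unit_vec t s else V2.representation Bv (col t) (e (s - m)))"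

lemma encode_code_matrix_eq_0:
  assumes "encode (m + k) m code_matrix w = 0" "t < m"
  shows "w t = coord_functional (\<lambda>i. w (m + i)) (col t)"
proof -
  have "0 = (\<Sum>s<m + k. code_matrix t s * w s)"
    using fun_cong[OF assms(1), of t] assms(2) by (simp add: encode_def)
  also have "\<dots> = w t + coord_functional (\<lambda>i. w (m + i)) (col t)"
    using assms(2) by (simp add: sum_lessThan_add code_matrix_def unit_vec_times coord_functional_def)
  finally show ?thesis by (simp add: bit_add_eq_0_iff)
qed

lemma code_matrix_decodes:
  assumes dH: "(d, H) \<in> receivers m r k" and known0: "\<forall>h\<in>H. lin_eval (m + k) h w = 0"
    and encode0: "encode (m + k) m code_matrix w = 0"
  shows "w d = 0"
  using dH
proof (cases rule: receivers_cases)
  case (R1 i B)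
  let ?x = "\<lambda>i. w (m + i)"
  have B_ground: "B \<subseteq> ground m" using basis_subset_ground[OF R1(4)] .
  have "coord_functional ?x (col j) = 0" if "j \<in> B" for j
    using that B_ground known0 R1(2) encode_code_matrix_eq_0[OF encode0]
    by (force simp: ground_def lin_eval_unit_vec)
  moreover obtain j where "j \<in> ground m" "e i = col j"
    using enumerates_Bv R1(3) Bv_columns by (auto simp: bij_betw_def)
  ultimately have "coord_functional ?x (e i) = 0"
    using B_ground columns_in_span basis_columns_span[OF R1(4)]
    by (intro coord_functional_vanishes_on_span[of "col ` B"]) auto
  then show ?thesis using coord_functional_basis[OF R1(3)] R1(1) by simp
next
  case (R2 C)
  have C_ground: "C \<subseteq> ground m" using circuit_subset_ground[OF R2(1)] .
  then have fin: "finite C" by (rule finite_subset_ground)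
  have "C - {d} \<subseteq> {..<m + k}" using C_ground by (auto simp: ground_def)
  then have "(\<Sum>j\<in>C - {d}. w j) = 0"
    using known0 R2(3) by (simp add: lin_eval_indic)
  moreover have "(\<Sum>j\<in>C. w j) = coord_functional (\<lambda>i. w (m + i)) (\<Sum>j\<in>C. col j)"
    using fin C_ground columns_in_span encode_code_matrix_eq_0[OF encode0]
    by (subst coord_functional_sum) (auto simp: ground_def intro!: sum.cong)
  ultimately show ?thesis
    using circuit_columns_sum_zero[OF R2(1)] sum.remove[OF fin R2(2), of w] by simp
next
  case R3
  then have "w (m + i) = 0" if "i < k" for i
    using known0 that lin_eval_unit_vec[of "m + i" "m + k" w] by auto
  then show ?thesis
    using encode_code_matrix_eq_0[OF encode0 R3(1)] by (simp add: coord_functional_def)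
qed

end

context F2_represented
begin

lemma exists_perfect_code: "\<exists>L. is_index_code (m + k) (receivers m r k) m L"
proof -
  obtain Bv where Bv: "Bv \<subseteq> col ` ground m" "V2.independent Bv" "col ` ground m \<subseteq> V2.span Bv"
    "card Bv = V2.dim (col ` ground m)"
    by (rule V2.basis_exists)
  have "card Bv = k" using Bv(4) represents[of "ground m"] rank_ground by simp
  moreover have "finite Bv" using finite_subset[OF Bv(1)] by simp
  ultimately obtain e where "bij_betw e {..<k} Bv"
    using ex_bij_betw_nat_finite[of Bv] by (auto simp: lessThan_atLeast0)
  then interpret F2_coordinatised m r k col Bv e
    using Bv by unfold_locales
  have "is_index_code (m + k) (receivers m r k) m code_matrix"
    using code_matrix_decodes by (auto simp: is_index_code_iff_kernel)
  then show ?thesis by blast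
qed

end

locale perfect_code = rank_k_matroid +
  fixes L :: "nat \<Rightarrow> nat \<Rightarrow> bit"
  assumes code: "is_index_code (m + k) (receivers m r k) m L"
begin

abbreviation kernel :: "(nat \<Rightarrow> bit) set" where
  "kernel \<equiv> code_kernel (m + k) m L"

lemma kernel_decodes:
  "(d, H) \<in> receivers m r k \<Longrightarrow> \<forall>h\<in>H. lin_eval (m + k) h w = 0 \<Longrightarrow> w \<in> kernel \<Longrightarrow> w d = 0"
  using code unfolding is_index_code_iff_kernel code_kernel_def by blast

lemma card_kernel: "2 ^ k \<le> card kernel"
  using card_code_kernel[of "m + k" m L] by (simp add: power_add)

lemma kernel_eq_0_if_vanishes_on_basis:
  assumes B: "B \<in> bases m r" and w: "w \<in> kernel" and vanish: "\<forall>j\<in>B. w j = 0"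
  shows "w = 0"
proof -
  have B_ground: "B \<subseteq> ground m" using basis_subset_ground[OF B] .
  have x: "w (m + i) = 0" if "i < k" for i
  proof (rule kernel_decodes[OF _ _ w])
    show "(m + i, unit_vec ` B) \<in> receivers m r k"
      using B that unfolding receivers_def R1_def by blast
    show "\<forall>h\<in>unit_vec ` B. lin_eval (m + k) h w = 0"
      using B_ground vanish by (auto simp: ground_def lin_eval_unit_vec)
  qed
  have y: "w j = 0" if "j < m" for j
  proof (rule kernel_decodes[OF _ _ w])
    show "(j, unit_vec ` {m..<m+k}) \<in> receivers m r k"
      using that unfolding receivers_def R3_def by blast
    show "\<forall>h\<in>unit_vec ` {m..<m+k}. lin_eval (m + k) h w = 0"
      using x by (auto simp: lin_eval_unit_vec dest!: le_Suc_ex)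
  qed
  show "w = 0"
  proof
    fix s
    consider "s < m" | i where "s = m + i" "i < k" | "m + k \<le> s"
      by (metis add_diff_inverse_nat nat_add_left_cancel_less not_less)
    then show "w s = 0 s" using x y w by cases (auto simp: code_kernel_def)
  qed
qed

lemma kernel_restrict_basis_surj:
  assumes B: "B \<in> bases m r" and z: "\<forall>j. j \<notin> B \<longrightarrow> z j = 0"
  shows "\<exists>w\<in>kernel. \<forall>j\<in>B. w j = z j"
proof -
  define restrict :: "(nat \<Rightarrow> bit) \<Rightarrow> nat \<Rightarrow> bit" where
    "restrict w j = (if j \<in> B then w j else 0)" for w j
  let ?Z = "{z::nat \<Rightarrow> bit. \<forall>j. j \<notin> B \<longrightarrow> z j = 0}"
  have fin: "finite B" using basis_subset_ground[OF B] by (rule finite_subset_ground)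
  have "inj_on restrict kernel"
  proof (rule inj_onI)
    fix w w' assume w: "w \<in> kernel" "w' \<in> kernel" and eq: "restrict w = restrict w'"
    have "\<forall>j\<in>B. (w + w') j = 0"
      using eq by (simp add: restrict_def fun_eq_iff bit_add_eq_0_iff) meson
    then have "w + w' = 0"
      using kernel_eq_0_if_vanishes_on_basis[OF B code_kernel_add[OF w]] by blast
    then show "w = w'" by (simp add: fun_eq_iff bit_add_eq_0_iff)
  qed
  then have "card ?Z \<le> card (restrict ` kernel)"
    using card_kernel finite_card_supported_functions(2)[OF fin] card_basis_k[OF B]
    by (simp add: card_image)
  moreover have "restrict ` kernel \<subseteq> ?Z" by (auto simp: restrict_def)
  ultimately have "restrict ` kernel = ?Z"
    using finite_card_supported_functions(1)[OF fin] by (intro card_seteq) auto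
  then have "z \<in> restrict ` kernel" using z by simp
  then obtain w where "w \<in> kernel" "z = restrict w" by blast
  then show ?thesis by (auto simp: restrict_def)
qed

lemma kernel_restrict_indep_surj:
  assumes J: "J \<subseteq> ground m" "indep r J" and z: "\<forall>j. j \<notin> J \<longrightarrow> z j = 0"
  shows "\<exists>w\<in>kernel. \<forall>j\<in>J. w j = z j"
proof -
  obtain B where "J \<subseteq> B" "B \<in> bases m r" using indep_extend_basis[OF J] .
  with kernel_restrict_basis_surj[of B z] z show ?thesis by blast
qed

lemma kernel_circuit_sum:
  assumes C: "C \<in> circuits m r" and w: "w \<in> kernel"
  shows "(\<Sum>j\<in>C. w j) = 0"
proof -
  have C_ground: "C \<subseteq> ground m" using circuit_subset_ground[OF C] .
  then have fin: "finite C" by (rule finite_subset_ground)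
  obtain y where y: "y \<in> C" using circuit_nonempty[OF C] by blast
  let ?s = "\<lambda>w. \<Sum>j\<in>C - {y}. w j"
  have split: "(\<Sum>j\<in>C. v j) = v y + ?s v" for v :: "nat \<Rightarrow> bit" by (rule sum.remove[OF fin y])
  have decode: "v y = 0" if "v \<in> kernel" "?s v = 0" for v
  proof (rule kernel_decodes[OF _ _ that(1)])
    show "(y, {indic (C - {y})}) \<in> receivers m r k"
      using C y unfolding receivers_def R2_def by blast
    have "C - {y} \<subseteq> {..<m + k}" using C_ground by (auto simp: ground_def)
    then show "\<forall>h\<in>{indic (C - {y})}. lin_eval (m + k) h v = 0"
      using that(2) by (simp add: lin_eval_indic)
  qed
  show ?thesis
  proof (cases "?s w = 0")
    case True
    then show ?thesis using decode[OF w] split by simp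
  next
    case False
    then have "C \<noteq> {y}" by auto
    then have "indep r {y}" using C y unfolding circuits_def by blast
    moreover have "\<forall>j. j \<notin> {y} \<longrightarrow> unit_vec y j = 0" by (simp add: unit_vec_def)
    ultimately obtain w1 where "w1 \<in> kernel" "\<forall>j\<in>{y}. w1 j = unit_vec y j"
      using kernel_restrict_indep_surj[of "{y}"] C_ground y by blast
    then have w1: "w1 \<in> kernel" "w1 y = 1" by (simp_all add: unit_vec_def)
    then have "?s w1 = 1" using decode by fastforce
    then have "?s (w + w1) = 0" using False by (simp add: sum.distrib)
    then have "w y = 1"
      using decode[OF code_kernel_add[OF w w1(1)]] w1(2) by (simp add: bit_add_eq_0_iff)
    then show ?thesis using split False by simp
  qed
qed

lemma indep_iff_kernel_independent:
  assumes J: "J \<subseteq> ground m"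
  shows "indep r J \<longleftrightarrow> (\<forall>c. (\<forall>w\<in>kernel. (\<Sum>j\<in>J. c j * w j) = 0) \<longrightarrow> (\<forall>j\<in>J. c j = 0))"
proof (intro iffI allI impI ballI)
  fix c j assume "indep r J" and c: "\<forall>w\<in>kernel. (\<Sum>j\<in>J. c j * w j) = 0" and j: "j \<in> J"
  have "\<forall>i. i \<notin> J \<longrightarrow> unit_vec j i = 0" using j by (simp add: unit_vec_def)
  then obtain w where w: "w \<in> kernel" "\<forall>i\<in>J. w i = unit_vec j i"
    using kernel_restrict_indep_surj[OF J \<open>indep r J\<close>] by blast
  have "(\<Sum>i\<in>J. c i * w i) = (\<Sum>i\<in>J. if i = j then c i else 0)"
    using w(2) by (intro sum.cong) (auto simp: unit_vec_def)
  then have "(\<Sum>i\<in>J. c i * w i) = c j" using j finite_subset_ground[OF J] by simp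
  then show "c j = 0" using c w(1) by simp
next
  assume indep_kernel: "\<forall>c. (\<forall>w\<in>kernel. (\<Sum>j\<in>J. c j * w j) = 0) \<longrightarrow> (\<forall>j\<in>J. c j = 0)"
  show "indep r J"
  proof (rule ccontr)
    assume "\<not> indep r J"
    then obtain C where C: "C \<subseteq> J" "C \<in> circuits m r" by (rule dependent_contains_circuit[OF J])
    obtain y where "y \<in> C" using circuit_nonempty[OF C(2)] by blast
    have "(\<Sum>j\<in>J. indic C j * w j) = 0" if "w \<in> kernel" for w
      using kernel_circuit_sum[OF C(2) that] C(1) finite_subset_ground[OF J]
      by (simp add: indic_def if_distrib if_distribR sum.If_cases Int_absorb1)
    then have "indic C y = 0" using indep_kernel C(1) \<open>y \<in> C\<close> by blast
    then show False using \<open>y \<in> C\<close> by (simp add: indic_def)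
  qed
qed

lemma representable: "F2_representable m r"
proof -
  obtain n col where zero: "\<forall>i j. n \<le> j \<longrightarrow> col i j = (0::bit)"
    and rows: "\<And>S c. (\<Sum>j\<in>S. scale2 (c j) (col j)) = 0 \<longleftrightarrow> (\<forall>w\<in>kernel. (\<Sum>j\<in>S. c j * w j) = 0)"
    using exists_matrix_with_rows[OF finite_code_kernel] by blast
  have "indep r J \<longleftrightarrow> independent_family col J" if "J \<subseteq> ground m" for J
    using indep_iff_kernel_independent[OF that] by (simp add: independent_family_def rows)
  then have "rank2 (col ` S) = r S" if "S \<subseteq> ground m" for S
    using dim_eq_rank_if_same_independent_sets[OF _ that] by (simp add: rank2_def)
  then show ?thesis using zero unfolding F2_representable_def by blast
qed

end

context rank_k_matroid
begin

lemma representable_iff_perfect_code: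
  assumes "m > 0"
  shows "F2_representable m r \<longleftrightarrow> perfect_scalar_linear_code_exists (m + k) (receivers m r k)"
proof
  assume "F2_representable m r"
  then obtain col where "\<And>S. S \<subseteq> ground m \<Longrightarrow> V2.dim (col ` S) = r S"
    unfolding F2_representable_def rank2_def by blast
  then interpret F2_represented m r k col by unfold_locales
  show "perfect_scalar_linear_code_exists (m + k) (receivers m r k)"
    using exists_perfect_code mu_receivers[OF assms]
    by (simp add: perfect_scalar_linear_code_exists_def)
next
  assume "perfect_scalar_linear_code_exists (m + k) (receivers m r k)"
  then obtain L where "is_index_code (m + k) (receivers m r k) m L"
    using mu_receivers[OF assms] by (auto simp: perfect_scalar_linear_code_exists_def)
  then interpret perfect_code m r k L by unfold_locales
  show "F2_representable m r" by (rule representable)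
qed

lemma representable_and_perfect_code_if_empty_ground:
  assumes "m = 0"
  shows "F2_representable m r" "perfect_scalar_linear_code_exists (m + k) (receivers m r k)"
proof -
  have "rank2 ((\<lambda>i j. 0) ` S) = r S" if "S \<subseteq> ground m" for S
    using that assms V2.dim_eq_card_independent[OF V2.independent_empty]
    by (simp add: ground_def rank2_def)
  then show "F2_representable m r"
    unfolding F2_representable_def by (intro exI[of _ 0] exI[of _ "\<lambda>i j. 0"]) simp
  show "perfect_scalar_linear_code_exists (m + k) (receivers m r k)"
    using receivers_empty[OF assms]
    by (simp add: perfect_scalar_linear_code_exists_def is_index_code_def)
qed

end

theorem theorem3:
  fixes m k :: nat and r :: "nat set \<Rightarrow> nat"
  assumes "matroid_rank m r"
    and "r (ground m) = k"
  shows "F2_representable m r \<longleftrightarrow>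
         perfect_scalar_linear_code_exists (m + k) (receivers m r k)"
proof -
  interpret rank_k_matroid m r k
    using assms by unfold_locales
  show ?thesis
  proof (cases "m = 0")
    case True
    then show ?thesis using representable_and_perfect_code_if_empty_ground by blast
  next
    case False
    then show ?thesis using representable_iff_perfect_code by simp
  qed
qed

end
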